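(* Let $\ell\ge 2$ and let $u,v$ be vertices of $CK(2,\ell)$. The imprints $im(u)$ and $im(v)$ contain the same number of $+$ signs and the same number of $-$ signs if and only if $v$ can be obtained from $u$ by a finite sequence of the following operations: (i) rotation, replacing $a_1a_2\ldots a_\ell$ by $a_2\ldots a_\ell a_1$; (ii) valid swap, replacing a single symbol $a_i$ by a symbol of $\{0,1,2\}$ different from both cyclic neighbours $a_{i-1}$ and $a_{i+1}$ (indices modulo $\ell$).
   Context: $CK(2,\ell)$ has as vertices all sequences $a_1\ldots a_\ell\in\{0,1,2\}^\ell$ with $a_i\neq a_{i+1}$ for $1\le i\le\ell-1$ and $a_1\ne a_\ell$, and an arc from $a_1\ldots a_\ell$ to $b_1\ldots b_\ell$ iff both are vertices and $b_i=a_{i+1}$ for $1\le i\le \ell-1$. For distinct $a,b\in\{0,1,2\}$ define $sgn(0,1)=sgn(1,2)=sgn(2,0)=+$ and $sgn(1,0)=sgn(2,1)=sgn(0,2)=-$. The imprint of a vertex $v=v_1\ldots v_\ell$ is the sequence $im(v)=(sgn(v_1,v_2),sgn(v_2,v_3),\dots,sgn(v_{\ell-1},v_\ell),sgn(v_\ell,v_1))$ of length $\ell$. *)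

theory Defs
  imports Main
begin

text \<open>Vertices of CK(2,l): words a_1...a_l over {0,1,2} (0-indexed lists here),
  with consecutive symbols distinct, cyclically.\<close>
definition is_vertex :: "nat \<Rightarrow> nat list \<Rightarrow> bool" where
  "is_vertex l a \<longleftrightarrow> length a = l \<and> set a \<subseteq> {0,1,2}
     \<and> (\<forall>i. Suc i < l \<longrightarrow> a ! i \<noteq> a ! Suc i) \<and> a ! 0 \<noteq> a ! (l - 1)"

text \<open>sgn(a,b) = + (encoded as True) iff (a,b) is one of (0,1),(1,2),(2,0).\<close>
definition sgn_pos :: "nat \<Rightarrow> nat \<Rightarrow> bool" where
  "sgn_pos a b \<longleftrightarrow> (a, b) \<in> {(0,1), (1,2), (2,0)}"

definition imprint :: "nat list \<Rightarrow> bool list" where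
  "imprint a = map (\<lambda>i. sgn_pos (a ! i) (a ! ((i + 1) mod length a))) [0..<length a]"

definition count_plus :: "nat list \<Rightarrow> nat" where
  "count_plus a = length (filter (\<lambda>s. s) (imprint a))"

definition count_minus :: "nat list \<Rightarrow> nat" where
  "count_minus a = length (filter (\<lambda>s. \<not> s) (imprint a))"

definition valid_swap :: "nat list \<Rightarrow> nat list \<Rightarrow> bool" where
  "valid_swap a b \<longleftrightarrow> (\<exists>i c. i < length a \<and> c \<in> {0,1,2}
     \<and> c \<noteq> a ! ((i + length a - 1) mod length a)
     \<and> c \<noteq> a ! ((i + 1) mod length a)
     \<and> b = a[i := c])"

definition op_step :: "nat list \<Rightarrow> nat list \<Rightarrow> bool" where
  "op_step a b \<longleftrightarrow> b = rotate1 a \<or> valid_swap a b"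

end

theory Submission
  imports Defs
begin

text \<open>
  Read each \<open>+\<close> of an imprint as the step \<open>+1\<close> and each \<open>-\<close> as the step \<open>-1\<close> modulo 3.
  A vertex is then the closed walk of its imprint started at its first symbol. A valid swap that
  changes anything replaces \<open>a\<^sub>i\<close> by the third symbol when \<open>a\<^sub>i\<^sub>-\<^sub>1 = a\<^sub>i\<^sub>+\<^sub>1\<close>, i.e. it exchanges two
  adjacent opposite signs of the imprint, and a rotation rotates the imprint and advances the
  starting symbol by one step; so both operations preserve the sign counts. Conversely, adjacent
  exchanges sort the imprint of \<open>u\<close> into \<open>+\<^sup>p-\<^sup>q\<close>, and rotating once and sorting again advances
  the starting symbol of the sorted walk by one step, so after at most two rounds it agrees with
  the starting symbol reached from \<open>v\<close>.
\<close>

section \<open>Walks on three symbols\<close>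

definition next_sym :: "nat \<Rightarrow> bool \<Rightarrow> nat" where
  "next_sym c b = (c + (if b then 1 else 2)) mod 3"

fun walk :: "nat \<Rightarrow> bool list \<Rightarrow> nat list" where
  "walk c [] = []"
| "walk c (b # s) = c # walk (next_sym c b) s"

fun walk_end :: "nat \<Rightarrow> bool list \<Rightarrow> nat" where
  "walk_end c [] = c"
| "walk_end c (b # s) = walk_end (next_sym c b) s"

lemma length_walk [simp]: "length (walk c s) = length s"
  by (induction s arbitrary: c) auto

lemma walk_append: "walk c (s @ t) = walk c s @ walk (walk_end c s) t"
  by (induction s arbitrary: c) auto

lemma walk_end_append: "walk_end c (s @ t) = walk_end (walk_end c s) t"
  by (induction s arbitrary: c) auto

lemma less_3_cases: "(c::nat) < 3 \<Longrightarrow> c = 0 \<or> c = 1 \<or> c = 2"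
  by arith

lemma next_sym_less [simp]: "next_sym c b < 3"
  by (simp add: next_sym_def)

lemma walk_end_less: "c < 3 \<Longrightarrow> walk_end c s < 3"
  by (induction s arbitrary: c) auto

lemma next_sym_neq: "c < 3 \<Longrightarrow> next_sym c b \<noteq> c"
  unfolding next_sym_def by (cases b) presburger+

lemma next_sym_cancel: "c < 3 \<Longrightarrow> b1 \<noteq> b2 \<Longrightarrow> next_sym (next_sym c b1) b2 = c"
  by (cases b1; cases b2) (auto dest!: less_3_cases simp: next_sym_def)

lemma next_sym_thrice: "c < 3 \<Longrightarrow> next_sym (next_sym (next_sym c b) b) b = c"
  by (cases b) (auto dest!: less_3_cases simp: next_sym_def)

lemma next_sym_cases:
  "c < 3 \<Longrightarrow> d < 3 \<Longrightarrow> d = c \<or> d = next_sym c b \<or> d = next_sym (next_sym c b) b"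
  by (cases b) (auto dest!: less_3_cases simp: next_sym_def)

lemma next_sym_sgn_pos: "x < 3 \<Longrightarrow> y < 3 \<Longrightarrow> x \<noteq> y \<Longrightarrow> next_sym x (sgn_pos x y) = y"
  by (auto dest!: less_3_cases simp: next_sym_def sgn_pos_def)

section \<open>Vertices as closed walks\<close>

lemma length_imprint [simp]: "length (imprint a) = length a"
  by (simp add: imprint_def)

lemma imprint_nth:
  "j < length a \<Longrightarrow> imprint a ! j = sgn_pos (a ! j) (a ! ((j + 1) mod length a))"
  by (simp add: imprint_def)

lemma imprint_eq_map2: "imprint a = map2 sgn_pos a (rotate1 a)"
  by (rule nth_equalityI) (simp_all add: imprint_def nth_rotate1)

lemma is_vertex_length_ge_2: "is_vertex l a \<Longrightarrow> l \<ge> 2"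
  unfolding is_vertex_def by (cases "l = 0 \<or> l = 1") auto

lemma is_vertex_iff_cyclic:
  assumes "l \<ge> 2"
  shows "is_vertex l a \<longleftrightarrow>
    length a = l \<and> set a \<subseteq> {0,1,2} \<and> (\<forall>j<l. a ! j \<noteq> a ! ((j + 1) mod l))"
proof -
  have "j < l \<longleftrightarrow> Suc j < l \<or> j = l - 1" for j
    using assms by auto
  then have split: "(\<forall>j<l. P j) \<longleftrightarrow> (\<forall>i. Suc i < l \<longrightarrow> P i) \<and> P (l - 1)" for P
    by blast
  have "(j + 1) mod l = Suc j" if "Suc j < l" for j
    using that by simp
  moreover have "(l - 1 + 1) mod l = 0"
    using assms by simp
  ultimately show ?thesis
    unfolding is_vertex_def split[of "\<lambda>j. a ! j \<noteq> a ! ((j + 1) mod l)"] by auto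
qed

lemma set_zip_rotate1:
  "set (zip a (rotate1 a)) = (\<lambda>j. (a ! j, a ! ((j + 1) mod length a))) ` {..<length a}"
  by (auto simp: set_zip nth_rotate1 image_def)

lemma is_vertex_iff_zip_rotate1:
  assumes "l \<ge> 2"
  shows "is_vertex l a \<longleftrightarrow>
    length a = l \<and> set a \<subseteq> {0,1,2} \<and> (\<forall>(y, z) \<in> set (zip a (rotate1 a)). y \<noteq> z)"
  unfolding is_vertex_iff_cyclic[OF assms] set_zip_rotate1 by auto

lemma is_vertex_hd_less: "is_vertex l a \<Longrightarrow> hd a < 3"
  using is_vertex_length_ge_2[of l a] by (cases a) (auto simp: is_vertex_def)

lemma walk_map2_sgn_pos:
  assumes "set (x # p) \<subseteq> {..<3}" "\<forall>(y, z) \<in> set (zip (x # p) p). y \<noteq> z"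
  shows "walk x (map2 sgn_pos (x # p) p) @ [walk_end x (map2 sgn_pos (x # p) p)] = x # p"
  using assms
proof (induction p arbitrary: x)
  case (Cons y p)
  then show ?case by (simp add: next_sym_sgn_pos)
qed simp

lemma vertex_eq_walk_imprint:
  assumes "is_vertex l a"
  shows "walk (hd a) (imprint a) = a \<and> walk_end (hd a) (imprint a) = hd a"
proof -
  obtain x p where a: "a = x # p"
    using assms is_vertex_length_ge_2 by (cases a) (auto simp: is_vertex_def)
  have zip_eq: "zip (x # p @ [x]) (p @ [x]) = zip a (rotate1 a)"
    using zip_append1[of "x # p" "[x]" "p @ [x]"] a by simp
  have "set (x # p @ [x]) \<subseteq> {..<3}"
    using assms a by (auto simp: is_vertex_def)
  moreover have "\<forall>(y, z) \<in> set (zip (x # p @ [x]) (p @ [x])). y \<noteq> z"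
    using assms is_vertex_iff_zip_rotate1[OF is_vertex_length_ge_2[OF assms]] zip_eq by simp
  moreover have "map2 sgn_pos (x # p @ [x]) (p @ [x]) = imprint a"
    unfolding imprint_eq_map2 zip_eq ..
  ultimately have "walk x (imprint a) @ [walk_end x (imprint a)] = x # p @ [x]"
    using walk_map2_sgn_pos[of x "p @ [x]"] by simp
  then show ?thesis
    using a by (metis append_Cons butlast_snoc last_snoc list.sel(1))
qed

section \<open>Exchanging adjacent signs of the imprint\<close>

text \<open>\<open>hd (ys @ xs @ [p])\<close> is the cyclic successor of the replaced entry \<open>m\<close>.\<close>

lemma valid_swap_appendI:
  assumes "c \<in> {0,1,2}" "c \<noteq> p" "c \<noteq> hd (ys @ xs @ [p])"
  shows "valid_swap (xs @ [p, m] @ ys) (xs @ [p, c] @ ys)"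
  unfolding valid_swap_def
proof (intro exI conjI)
  let ?a = "xs @ [p, m] @ ys" and ?i = "Suc (length xs)"
  have len: "length ?a = length xs + 2 + length ys"
    by simp
  show "?i < length ?a" "c \<in> {0,1,2}"
    using assms(1) by simp_all
  have "?i + length ?a - 1 = length xs + length ?a"
    by simp
  then have "(?i + length ?a - 1) mod length ?a = length xs"
    by (simp only: mod_add_self2) simp
  then show "c \<noteq> ?a ! ((?i + length ?a - 1) mod length ?a)"
    using assms(2) by (simp add: nth_append)
  show "c \<noteq> ?a ! ((?i + 1) mod length ?a)"
  proof (cases ys)
    case Nil
    then show ?thesis
      using assms(3) by (cases xs) simp_all
  next
    case (Cons y ys')
    then have "(?i + 1) mod length ?a = length xs + 2"
      unfolding len by simp
    then show ?thesis
      using assms(3) Cons by (simp add: nth_append)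
  qed
  show "xs @ [p, c] @ ys = ?a[?i := c]"
    by (simp add: list_update_append)
qed

definition sign_swap :: "bool list \<Rightarrow> bool list \<Rightarrow> bool" where
  "sign_swap s t \<longleftrightarrow>
    (\<exists>xs ys b1 b2. b1 \<noteq> b2 \<and> s = xs @ [b1, b2] @ ys \<and> t = xs @ [b2, b1] @ ys)"

lemma walk_sign_swap:
  assumes "sign_swap s t" "c < 3" "walk_end c s = c"
  shows "valid_swap (walk c s) (walk c t) \<and> walk_end c t = c"
proof -
  obtain xs ys b1 b2 where b: "b1 \<noteq> b2"
    and s: "s = xs @ [b1, b2] @ ys" and t: "t = xs @ [b2, b1] @ ys"
    using assms(1) unfolding sign_swap_def by blast
  define e where "e = walk_end c xs"
  have e: "e < 3"
    using walk_end_less[OF assms(2)] e_def by simp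
  have walk_s: "walk c s = walk c xs @ [e, next_sym e b1] @ walk e ys"
    and walk_t: "walk c t = walk c xs @ [e, next_sym e b2] @ walk e ys"
    using s t e b by (simp_all add: walk_append e_def next_sym_cancel)
  have end_s: "walk_end c s = walk_end e ys" and end_t: "walk_end c t = walk_end e ys"
    using s t e b by (simp_all add: walk_end_append e_def next_sym_cancel)
  have "hd (walk e ys @ walk c xs @ [e]) = e"
    using assms(3) end_s by (cases ys; cases xs) simp_all
  then have "valid_swap (walk c s) (walk c t)"
    unfolding walk_s walk_t
    using next_sym_neq[OF e] less_3_cases[OF next_sym_less] by (intro valid_swap_appendI) auto
  then show ?thesis
    using assms(3) end_s end_t by simp
qed

lemma symp_sign_swap: "symp sign_swap"
  unfolding sign_swap_def symp_def by blast

lemma sign_swaps_Cons: "sign_swap\<^sup>*\<^sup>* s t \<Longrightarrow> sign_swap\<^sup>*\<^sup>* (b # s) (b # t)"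
proof (induction rule: rtranclp_induct)
  case (step t u)
  have "sign_swap (b # t) (b # u)"
    using step.hyps(2) unfolding sign_swap_def by (metis append_Cons)
  then show ?case
    using step.IH by simp
qed simp

definition sorted_signs :: "bool list \<Rightarrow> bool list" where
  "sorted_signs s =
    replicate (length (filter (\<lambda>x. x) s)) True @ replicate (length (filter (\<lambda>x. \<not> x) s)) False"

lemma sorted_signs_idem [simp]: "sorted_signs (sorted_signs s) = sorted_signs s"
  by (simp add: sorted_signs_def)

lemma length_sorted_signs [simp]: "length (sorted_signs s) = length s"
  using sum_length_filter_compl[of "\<lambda>x. x" s] by (simp add: sorted_signs_def)

lemma sorted_signs_snoc: "sorted_signs (s @ [b]) = sorted_signs (b # s)"
  by (cases b) (simp_all add: sorted_signs_def)

lemma sign_swaps_False_past_Trues: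
  "sign_swap\<^sup>*\<^sup>* (False # replicate p True @ r) (replicate p True @ False # r)"
proof (induction p)
  case (Suc p)
  have "sign_swap (False # True # replicate p True @ r) (True # False # replicate p True @ r)"
    unfolding sign_swap_def by (rule exI[of _ "[]"]) auto
  then show ?case
    using sign_swaps_Cons[OF Suc] by (simp add: converse_rtranclp_into_rtranclp)
qed simp

lemma sign_swaps_sorted_signs: "sign_swap\<^sup>*\<^sup>* s (sorted_signs s)"
proof (induction s)
  case (Cons b s)
  have "sign_swap\<^sup>*\<^sup>* (b # s) (b # sorted_signs s)"
    using sign_swaps_Cons[OF Cons] .
  moreover have "sign_swap\<^sup>*\<^sup>* (b # sorted_signs s) (sorted_signs (b # s))"
    using sign_swaps_False_past_Trues by (cases b) (simp_all add: sorted_signs_def)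
  ultimately show ?case
    by simp
qed (simp add: sorted_signs_def)

lemma walk_sign_swaps:
  assumes "sign_swap\<^sup>*\<^sup>* s t" "c < 3" "walk_end c s = c"
  shows "op_step\<^sup>*\<^sup>* (walk c s) (walk c t) \<and> walk_end c t = c"
  using assms(1)
proof (induction rule: rtranclp_induct)
  case (step t u)
  then show ?case
    using walk_sign_swap[OF step.hyps(2) assms(2)]
    by (metis op_step_def rtranclp.rtrancl_into_rtrancl)
qed (use assms in simp)

lemma walk_sorted_signs_advance:
  assumes "c < 3" "walk_end c (b # s) = c" "sorted_signs (b # s) = b # s"
  shows "op_step\<^sup>*\<^sup>* (walk c (b # s)) (walk (next_sym c b) (b # s))
    \<and> walk_end (next_sym c b) (b # s) = next_sym c b"
proof -
  let ?d = "next_sym c b"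
  have "rotate1 (walk c (b # s)) = walk ?d (s @ [b])" and "walk_end ?d (s @ [b]) = ?d"
    using assms(2) by (simp_all add: walk_append walk_end_append)
  moreover have "sign_swap\<^sup>*\<^sup>* (s @ [b]) (b # s)"
    using sign_swaps_sorted_signs[of "s @ [b]"] assms(3) by (simp add: sorted_signs_snoc)
  ultimately show ?thesis
    using walk_sign_swaps[of "s @ [b]" "b # s" ?d]
    by (metis converse_rtranclp_into_rtranclp next_sym_less op_step_def)
qed

lemma walk_sorted_signs_any_start:
  assumes "c < 3" "d < 3" "walk_end c s = c" "s \<noteq> []" "sorted_signs s = s"
  shows "op_step\<^sup>*\<^sup>* (walk c s) (walk d s)"
proof -
  obtain b t where s: "s = b # t"
    using assms(4) by (cases s) auto
  define c1 where "c1 = next_sym c b"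
  define c2 where "c2 = next_sym c1 b"
  have 1: "op_step\<^sup>*\<^sup>* (walk c s) (walk c1 s)" "walk_end c1 s = c1"
    using walk_sorted_signs_advance[of c b t] assms s c1_def by auto
  have 2: "op_step\<^sup>*\<^sup>* (walk c1 s) (walk c2 s)" "walk_end c2 s = c2"
    using walk_sorted_signs_advance[of c1 b t] 1(2) assms s c1_def c2_def by auto
  have 3: "op_step\<^sup>*\<^sup>* (walk c2 s) (walk c s)"
    using walk_sorted_signs_advance[of c2 b t] 2(2) assms s c1_def c2_def next_sym_thrice
    by auto
  show ?thesis
    using next_sym_cases[OF assms(1,2), of b] 1 2 3 unfolding c1_def[symmetric] c2_def[symmetric]
    by (meson rtranclp.rtrancl_refl rtranclp_trans)
qed

section \<open>Invariance of the sign counts\<close>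

lemma zip_rotate1: "length xs = length ys \<Longrightarrow> zip (rotate1 xs) (rotate1 ys) = rotate1 (zip xs ys)"
  by (cases xs; cases ys) simp_all

lemma imprint_rotate1: "imprint (rotate1 a) = rotate1 (imprint a)"
  by (simp add: imprint_eq_map2 zip_rotate1 rotate1_map)

lemma count_plus_rotate1: "count_plus (rotate1 a) = count_plus a"
  unfolding count_plus_def imprint_rotate1 by (cases "imprint a") simp_all

lemma is_vertex_rotate1:
  assumes "is_vertex l a"
  shows "is_vertex l (rotate1 a)"
  using assms unfolding is_vertex_iff_zip_rotate1[OF is_vertex_length_ge_2[OF assms]]
  by (simp add: zip_rotate1)

lemma count_plus_eq_sum: "count_plus a = (\<Sum>j<length a. of_bool (imprint a ! j))"
  unfolding count_plus_def length_filter_conv_card by (simp add: lessThan_def Collect_conj_eq)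

lemma sum_eq_if_differ_at_two:
  fixes f g :: "nat \<Rightarrow> 'a::comm_monoid_add"
  assumes "i \<in> A" "k \<in> A" "i \<noteq> k" "finite A"
    and "\<And>j. j \<in> A \<Longrightarrow> j \<noteq> i \<Longrightarrow> j \<noteq> k \<Longrightarrow> f j = g j"
    and "f i + f k = g i + g k"
  shows "sum f A = sum g A"
proof -
  have split: "sum h A = h i + h k + sum h (A - {i} - {k})" for h :: "nat \<Rightarrow> 'a"
    using assms(1-4) by (simp add: sum.remove[of A i] sum.remove[of "A - {i}" k] add.assoc)
  have "sum f (A - {i} - {k}) = sum g (A - {i} - {k})"
    using assms(5) by (intro sum.cong) auto
  then show ?thesis
    using split[of f] split[of g] assms(6) by simp
qed

lemma Suc_mod_eq_iff: "j < n \<Longrightarrow> i < n \<Longrightarrow> (j + 1) mod n = i \<longleftrightarrow> j = (i + n - 1) mod (n::nat)"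
  by (cases "Suc j = n"; cases i) (auto simp: mod_Suc)

text \<open>If \<open>x \<noteq> y\<close> the middle symbol is forced; if \<open>x = y\<close>, each detour \<open>x \<rightarrow> c \<rightarrow> x\<close> has exactly one \<open>+\<close>.\<close>

lemma sgn_pos_detour:
  assumes "x < 3" "y < 3" "c < 3" "d < 3" "c \<notin> {x, y}" "d \<notin> {x, y}"
  shows "of_bool (sgn_pos c y) + of_bool (sgn_pos x c)
    = (of_bool (sgn_pos d y) + of_bool (sgn_pos x d) :: nat)"
proof (cases "x = y")
  case True
  then show ?thesis
    using assms by (auto dest!: less_3_cases simp: sgn_pos_def)
next
  case False
  then have "c = d"
    using assms by simp
  then show ?thesis
    by simp
qed

lemma valid_swap_preserves_vertex_count_plus:
  assumes "is_vertex l a" "valid_swap a b"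
  shows "is_vertex l b \<and> count_plus b = count_plus a"
proof -
  have l: "l \<ge> 2"
    using is_vertex_length_ge_2[OF assms(1)] .
  have len: "length a = l" and sym: "set a \<subseteq> {0,1,2}"
    and cyc: "\<And>j. j < l \<Longrightarrow> a ! j \<noteq> a ! ((j + 1) mod l)"
    using assms(1) unfolding is_vertex_iff_cyclic[OF l] by auto
  obtain i c where i: "i < l" and c: "c \<in> {0,1,2}" and c_prev: "c \<noteq> a ! ((i + l - 1) mod l)"
    and c_next: "c \<noteq> a ! ((i + 1) mod l)" and b: "b = a[i := c]"
    using assms(2) len unfolding valid_swap_def by blast
  define k where "k = (i + l - 1) mod l"
  have k: "k < l" "(k + 1) mod l = i"
    using l i Suc_mod_eq_iff[of k l i] by (simp_all add: k_def)
  have pred: "\<And>j. j < l \<Longrightarrow> (j + 1) mod l = i \<longleftrightarrow> j = k"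
    using Suc_mod_eq_iff i k_def by simp
  have next_i: "(i + 1) mod l \<noteq> i"
    using i l by (cases "Suc i = l") auto
  then have "k \<noteq> i"
    using pred[OF i] by auto
  have len_b: "length b = l" and b_nth: "\<And>j. b ! j = (if j = i then c else a ! j)"
    using b len i by auto
  have sym_a: "\<And>j. j < l \<Longrightarrow> a ! j < 3"
    using sym len nth_mem by fastforce
  have "is_vertex l b"
    unfolding is_vertex_iff_cyclic[OF l]
  proof (intro conjI allI impI)
    show "set b \<subseteq> {0,1,2}"
      using b sym c set_update_subset_insert by fastforce
    show "b ! j \<noteq> b ! ((j + 1) mod l)" if "j < l" for j
      using that cyc[OF that] pred[OF that] b_nth next_i c_next c_prev by (auto simp: k_def)
  qed (use len_b in simp)
  moreover have "count_plus b = count_plus a"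
    unfolding count_plus_eq_sum len len_b
  proof (rule sum_eq_if_differ_at_two[of i _ k])
    show "of_bool (imprint b ! j) = of_bool (imprint a ! j)" if "j \<in> {..<l}" "j \<noteq> i" "j \<noteq> k" for j
      using that pred[of j] by (simp add: imprint_nth len len_b b_nth)
    have "a ! i \<notin> {a ! k, a ! ((i + 1) mod l)}"
      using cyc[OF i] cyc[OF k(1)] k(2) by auto
    then have "of_bool (sgn_pos c (a ! ((i + 1) mod l))) + of_bool (sgn_pos (a ! k) c)
      = (of_bool (sgn_pos (a ! i) (a ! ((i + 1) mod l))) + of_bool (sgn_pos (a ! k) (a ! i)) :: nat)"
      using sym_a i k(1) l c c_prev c_next by (intro sgn_pos_detour) (auto simp: k_def)
    moreover have "imprint b ! i = sgn_pos c (a ! ((i + 1) mod l))"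
      and "imprint b ! k = sgn_pos (a ! k) c"
      and "imprint a ! i = sgn_pos (a ! i) (a ! ((i + 1) mod l))"
      and "imprint a ! k = sgn_pos (a ! k) (a ! i)"
      using i k next_i \<open>k \<noteq> i\<close> by (simp_all add: imprint_nth len len_b b_nth)
    ultimately show "of_bool (imprint b ! i) + of_bool (imprint b ! k)
      = (of_bool (imprint a ! i) + of_bool (imprint a ! k) :: nat)"
      by (simp only:)
  qed (use i k \<open>k \<noteq> i\<close> in auto)
  ultimately show ?thesis ..
qed

lemma op_steps_preserve_vertex_count_plus:
  assumes "op_step\<^sup>*\<^sup>* u v" "is_vertex l u"
  shows "is_vertex l v \<and> count_plus v = count_plus u"
  using assms(1)
proof (induction rule: rtranclp_induct)
  case (step v w)
  then show ?case
    using is_vertex_rotate1 count_plus_rotate1 valid_swap_preserves_vertex_count_plus unfolding op_step_def by metis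
qed (use assms(2) in simp)

lemma count_minus_eq: "count_minus a = length a - count_plus a"
  using sum_length_filter_compl[of "\<lambda>s. s" "imprint a"]
  unfolding count_minus_def count_plus_def by simp

lemma vertex_steps_sorted_walk:
  assumes "is_vertex l a"
  defines "S \<equiv> sorted_signs (imprint a)"
  shows "op_step\<^sup>*\<^sup>* a (walk (hd a) S) \<and> op_step\<^sup>*\<^sup>* (walk (hd a) S) a \<and> walk_end (hd a) S = hd a"
proof -
  have a: "walk (hd a) (imprint a) = a" "walk_end (hd a) (imprint a) = hd a" "hd a < 3"
    using vertex_eq_walk_imprint[OF assms(1)] is_vertex_hd_less[OF assms(1)] by auto
  have there: "op_step\<^sup>*\<^sup>* a (walk (hd a) S)" "walk_end (hd a) S = hd a"
    using walk_sign_swaps[OF sign_swaps_sorted_signs[of "imprint a"] a(3,2)]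
    unfolding a(1) S_def by auto
  have "sign_swap\<^sup>*\<^sup>* S (imprint a)"
    using sympD[OF symp_rtranclp[OF symp_sign_swap] sign_swaps_sorted_signs] unfolding S_def .
  then have "op_step\<^sup>*\<^sup>* (walk (hd a) S) a"
    using walk_sign_swaps[of S "imprint a" "hd a"] a there(2) by simp
  with there show ?thesis
    by simp
qed

theorem lemma4:
  fixes l :: nat and u v :: "nat list"
  assumes "l \<ge> 2" and "is_vertex l u" and "is_vertex l v"
  shows "(count_plus u = count_plus v \<and> count_minus u = count_minus v)
           \<longleftrightarrow> op_step\<^sup>*\<^sup>* u v"
proof
  assume "count_plus u = count_plus v \<and> count_minus u = count_minus v"
  then have same_sorted: "sorted_signs (imprint u) = sorted_signs (imprint v)"
    by (simp add: sorted_signs_def count_plus_def count_minus_def)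
  define S where "S = sorted_signs (imprint v)"
  have u: "op_step\<^sup>*\<^sup>* u (walk (hd u) S)" "walk_end (hd u) S = hd u"
    using vertex_steps_sorted_walk[OF assms(2)] unfolding same_sorted S_def by auto
  have v: "op_step\<^sup>*\<^sup>* (walk (hd v) S) v"
    using vertex_steps_sorted_walk[OF assms(3)] unfolding S_def by auto
  have "length S = l"
    using assms(3) unfolding S_def is_vertex_def by simp
  then have "S \<noteq> []"
    using assms(1) by auto
  moreover have "sorted_signs S = S"
    unfolding S_def by simp
  ultimately have "op_step\<^sup>*\<^sup>* (walk (hd u) S) (walk (hd v) S)"
    using is_vertex_hd_less assms(2,3) u(2) by (intro walk_sorted_signs_any_start)
  then show "op_step\<^sup>*\<^sup>* u v"
    using u(1) v by (meson rtranclp_trans)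
next
  assume "op_step\<^sup>*\<^sup>* u v"
  then have "count_plus v = count_plus u"
    using op_steps_preserve_vertex_count_plus[OF _ assms(2)] by blast
  moreover have "length u = length v"
    using assms(2,3) unfolding is_vertex_def by simp
  ultimately show "count_plus u = count_plus v \<and> count_minus u = count_minus v"
    by (simp add: count_minus_eq)
qed

end
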